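(* Let $P$ be a fixed tree poset with $|P|$ elements. For every $\delta>0$ and positive integers $\ell,q$ there exists $\gamma=\gamma(\delta,\ell,q)>0$ such that the following holds for all $i,s\in[q]$ with $i\neq s$. Let $\mathcal{M}$ be an $\ell$-gapped family of $q$-marked chains with markers from $\widetilde{\mathcal{B}}_n$ and let $F\in\mathcal{L}^i(\mathcal{M})$. Suppose $F$ is $(i,s,\gamma)$-bad with respect to $\mathcal{M}$ and $n$ is sufficiently large. If $i<s$, then $F$ is $(i,\delta)$-lower bad with respect to $\mathcal{M}$; if $i>s$, then $F$ is $(i,\delta)$-upper bad with respect to $\mathcal{M}$.
   Context: $\widetilde{\mathcal{B}}_n=\{F\subseteq[n]: |\,|F|-n/2\,|<2\sqrt{n\ln n}\}$. Full chains, $q$-chains $(F_1\supsetneq\cdots\supsetneq F_q)$ with $i$-th member $F_i$, and $q$-marked chains $(\chi,Q)$ ($\chi$ a full chain $\emptyset\subsetneq\cdots\subsetneq[n]$ containing all members of the $q$-chain $Q$) are as usual. For a family $\mathcal{M}$ of $q$-marked chains, $\mathcal{L}^i(\mathcal{M})$ is the set of sets that are the $i$-th member of some $Q$ with $(\chi,Q)\in\mathcal{M}$, and $\mathcal{M}(F,i)$ is the set of $(\chi,Q)\in\mathcal{M}$ with $F$ the $i$-th member of $Q$. A family $\mathcal{F}$ is $\ell$-gapped if $|G\setminus F|\geq\ell$ whenever $F,G\in\mathcal{F}$, $F\subsetneq G$; $\mathcal{M}$ is $\ell$-gapped if the family of all members of its $q$-chains is. For $F\subseteq[n]$: $U(F)=\{S: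 S\supseteq F\}$, $D(F)=\{S:S\subseteq F\}$; for a family $\mathcal{S}$, $\mathrm{Comp}(\mathcal{S})$ is the set of subsets of $[n]$ comparable (by inclusion) to some member of $\mathcal{S}$; $D^*(F,\mathcal{S})=(D(F)\setminus\{F\})\cap\mathrm{Comp}(\mathcal{S})\cap\widetilde{\mathcal{B}}_n$ and $U^*(F,\mathcal{S})=(U(F)\setminus\{F\})\cap\mathrm{Comp}(\mathcal{S})\cap\widetilde{\mathcal{B}}_n$. For $i<s$, $F\in\mathcal{L}^i(\mathcal{M})$ is $(i,s,\gamma)$-bad w.r.t. $\mathcal{M}$ if there are $\mathcal{W}_1,\mathcal{W}_2\subseteq\widetilde{\mathcal{B}}_n$ with $\mathcal{W}_1\cap U(F)=\emptyset$, $|\mathcal{W}_1|\le|P|$, $|\mathcal{W}_2|\le\gamma n^{\ell(s-i)}$, and for every $(\chi,Q)\in\mathcal{M}(F,i)$ either $Q\cap D^*(F,\mathcal{W}_1)\neq\emptyset$ or the $s$-th member of $Q$ lies in $\mathcal{W}_2$. For $i>s$ it is defined analogously with $\mathcal{W}_1\cap D(F)=\emptyset$, $|\mathcal{W}_2|\le\gamma n^{\ell(i-s)}$, and $U^*(F,\mathcal{W}_1)$ in place of $D^*(F,\mathcal{W}_1)$. With $\chi_0$ a uniformly random full chain: $F$ is $(i,\delta)$-lower bad w.r.t. $\mathcal{M}$ if $\mathcal{M}(F,i)\neq\emptyset$ and some $\mathcal{W}$ satisfies (a) $D\subseteq F$ for all $D\in\mathcal{W}$, (b) $Q\cap\mathcal{W}\neq\emptyset$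 for every $(\chi,Q)\in\mathcal{M}(F,i)$, (c) $\Pr[\chi_0\cap\mathcal{W}\neq\emptyset\mid F\in\chi_0]\le\delta$; $(i,\delta)$-upper bad is the same with $D\supseteq F$ in (a). *)

theory Defs
  imports Complex_Main
begin

definition poset_on :: "'a set \<Rightarrow> ('a \<Rightarrow> 'a \<Rightarrow> bool) \<Rightarrow> bool" where
  "poset_on P le \<longleftrightarrow> (\<forall>x\<in>P. le x x) \<and>
     (\<forall>x\<in>P. \<forall>y\<in>P. le x y \<and> le y x \<longrightarrow> x = y) \<and>
     (\<forall>x\<in>P. \<forall>y\<in>P. \<forall>z\<in>P. le x y \<and> le y z \<longrightarrow> le x z)"

definition covers :: "'a set \<Rightarrow> ('a \<Rightarrow> 'a \<Rightarrow> bool) \<Rightarrow> 'a \<Rightarrow> 'a \<Rightarrow> bool" where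
  "covers P le x y \<longleftrightarrow> x \<in> P \<and> y \<in> P \<and> le x y \<and> x \<noteq> y \<and>
     \<not> (\<exists>z\<in>P. le x z \<and> le z y \<and> z \<noteq> x \<and> z \<noteq> y)"

definition hasse_edges :: "'a set \<Rightarrow> ('a \<Rightarrow> 'a \<Rightarrow> bool) \<Rightarrow> 'a set set" where
  "hasse_edges P le = {{x, y} | x y. covers P le x y}"

definition hasse_adj :: "'a set \<Rightarrow> ('a \<Rightarrow> 'a \<Rightarrow> bool) \<Rightarrow> ('a \<times> 'a) set" where
  "hasse_adj P le = {(x, y). covers P le x y \<or> covers P le y x}"

text \<open>A finite graph is a tree iff it is connected and has |V| - 1 edges.\<close>
definition tree_poset :: "'a set \<Rightarrow> ('a \<Rightarrow> 'a \<Rightarrow> bool) \<Rightarrow> bool" where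
  "tree_poset P le \<longleftrightarrow> finite P \<and> P \<noteq> {} \<and> poset_on P le \<and>
     (\<forall>x\<in>P. \<forall>y\<in>P. (x, y) \<in> (hasse_adj P le)\<^sup>*) \<and>
     card (hasse_edges P le) = card P - 1"

definition Btilde :: "nat \<Rightarrow> nat set set" where
  "Btilde n = {F. F \<subseteq> {1..n} \<and>
     \<bar>real (card F) - real n / 2\<bar> < 2 * sqrt (real n * ln (real n))}"

text \<open>A full chain is represented by its set of members
  \<open>\<emptyset> = C_0 \<subset> C_1 \<subset> \<dots> \<subset> C_n = [n]\<close>.\<close>
definition full_chain :: "nat \<Rightarrow> nat set set \<Rightarrow> bool" where
  "full_chain n \<chi> \<longleftrightarrow> \<chi> \<subseteq> Pow {1..n} \<and>
     (\<forall>A\<in>\<chi>. \<forall>B\<in>\<chi>. A \<subseteq> B \<or> B \<subseteq> A) \<and>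
     (\<forall>k\<le>n. \<exists>A\<in>\<chi>. card A = k)"

definition full_chains :: "nat \<Rightarrow> nat set set set" where
  "full_chains n = {\<chi>. full_chain n \<chi>}"

text \<open>A q-chain \<open>F_1 \<supset> \<dots> \<supset> F_q\<close> is a list of length q; its i-th member (1-indexed) is
  \<open>mem Q i = Q ! (i - 1)\<close>.\<close>
definition mem :: "nat set list \<Rightarrow> nat \<Rightarrow> nat set" where
  "mem Q i = Q ! (i - 1)"

definition q_chain :: "nat \<Rightarrow> nat set list \<Rightarrow> bool" where
  "q_chain q Q \<longleftrightarrow> length Q = q \<and> (\<forall>j. 1 \<le> j \<and> j < q \<longrightarrow> mem Q (j + 1) \<subset> mem Q j)"

definition q_marked_chain :: "nat \<Rightarrow> nat \<Rightarrow> nat set set \<times> nat set list \<Rightarrow> bool" where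
  "q_marked_chain n q m \<longleftrightarrow> full_chain n (fst m) \<and> q_chain q (snd m) \<and> set (snd m) \<subseteq> fst m"

definition gapped_family :: "nat \<Rightarrow> nat set set \<Rightarrow> bool" where
  "gapped_family l \<F> \<longleftrightarrow> (\<forall>F\<in>\<F>. \<forall>G\<in>\<F>. F \<subset> G \<longrightarrow> card (G - F) \<ge> l)"

definition members :: "(nat set set \<times> nat set list) set \<Rightarrow> nat set set" where
  "members \<M> = (\<Union>m\<in>\<M>. set (snd m))"

definition gapped_marked :: "nat \<Rightarrow> (nat set set \<times> nat set list) set \<Rightarrow> bool" where
  "gapped_marked l \<M> \<longleftrightarrow> gapped_family l (members \<M>)"

definition Lev :: "nat \<Rightarrow> (nat set set \<times> nat set list) set \<Rightarrow> nat set set" where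
  "Lev i \<M> = {mem (snd m) i | m. m \<in> \<M>}"

definition Msub :: "(nat set set \<times> nat set list) set \<Rightarrow> nat set \<Rightarrow> nat \<Rightarrow> (nat set set \<times> nat set list) set" where
  "Msub \<M> F i = {m \<in> \<M>. mem (snd m) i = F}"

definition Up :: "nat \<Rightarrow> nat set \<Rightarrow> nat set set" where
  "Up n F = {S. S \<subseteq> {1..n} \<and> F \<subseteq> S}"

definition Down :: "nat \<Rightarrow> nat set \<Rightarrow> nat set set" where
  "Down n F = {S. S \<subseteq> {1..n} \<and> S \<subseteq> F}"

definition Comp :: "nat \<Rightarrow> nat set set \<Rightarrow> nat set set" where
  "Comp n \<S> = {A. A \<subseteq> {1..n} \<and> (\<exists>B\<in>\<S>. A \<subseteq> B \<or> B \<subseteq> A)}"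

definition Dstar :: "nat \<Rightarrow> nat set \<Rightarrow> nat set set \<Rightarrow> nat set set" where
  "Dstar n F \<S> = (Down n F - {F}) \<inter> Comp n \<S> \<inter> Btilde n"

definition Ustar :: "nat \<Rightarrow> nat set \<Rightarrow> nat set set \<Rightarrow> nat set set" where
  "Ustar n F \<S> = (Up n F - {F}) \<inter> Comp n \<S> \<inter> Btilde n"

text \<open>\<open>(i,s,\<gamma>)\<close>-badness; \<open>p\<close> is \<open>|P|\<close>.\<close>
definition isg_bad :: "nat \<Rightarrow> nat \<Rightarrow> nat \<Rightarrow> nat \<Rightarrow> nat \<Rightarrow> real \<Rightarrow>
    (nat set set \<times> nat set list) set \<Rightarrow> nat set \<Rightarrow> bool" where
  "isg_bad n p l i s \<gamma> \<M> F \<longleftrightarrow> F \<in> Lev i \<M> \<and>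
     (if i < s then
       (\<exists>W1 W2. W1 \<subseteq> Btilde n \<and> W2 \<subseteq> Btilde n \<and> W1 \<inter> Up n F = {} \<and>
          card W1 \<le> p \<and> real (card W2) \<le> \<gamma> * real n ^ (l * (s - i)) \<and>
          (\<forall>m\<in>Msub \<M> F i. set (snd m) \<inter> Dstar n F W1 \<noteq> {} \<or> mem (snd m) s \<in> W2))
      else if s < i then
       (\<exists>W1 W2. W1 \<subseteq> Btilde n \<and> W2 \<subseteq> Btilde n \<and> W1 \<inter> Down n F = {} \<and>
          card W1 \<le> p \<and> real (card W2) \<le> \<gamma> * real n ^ (l * (i - s)) \<and>
          (\<forall>m\<in>Msub \<M> F i. set (snd m) \<inter> Ustar n F W1 \<noteq> {} \<or> mem (snd m) s \<in> W2))
      else False)"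

text \<open>\<open>Pr[\<chi>_0 \<inter> W \<noteq> \<emptyset> | F \<in> \<chi>_0]\<close> for a uniformly random full chain \<open>\<chi>_0\<close>.\<close>
definition cond_prob_hit :: "nat \<Rightarrow> nat set set \<Rightarrow> nat set \<Rightarrow> real" where
  "cond_prob_hit n W F =
     real (card {\<chi> \<in> full_chains n. F \<in> \<chi> \<and> \<chi> \<inter> W \<noteq> {}}) /
     real (card {\<chi> \<in> full_chains n. F \<in> \<chi>})"

definition lower_bad :: "nat \<Rightarrow> nat \<Rightarrow> real \<Rightarrow> (nat set set \<times> nat set list) set \<Rightarrow> nat set \<Rightarrow> bool" where
  "lower_bad n i \<delta> \<M> F \<longleftrightarrow> Msub \<M> F i \<noteq> {} \<and>
     (\<exists>W. (\<forall>D\<in>W. D \<subseteq> F) \<and> (\<forall>m\<in>Msub \<M> F i. set (snd m) \<inter> W \<noteq> {}) \<and>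
          cond_prob_hit n W F \<le> \<delta>)"

definition upper_bad :: "nat \<Rightarrow> nat \<Rightarrow> real \<Rightarrow> (nat set set \<times> nat set list) set \<Rightarrow> nat set \<Rightarrow> bool" where
  "upper_bad n i \<delta> \<M> F \<longleftrightarrow> Msub \<M> F i \<noteq> {} \<and>
     (\<exists>W. (\<forall>D\<in>W. F \<subseteq> D \<and> D \<subseteq> {1..n}) \<and> (\<forall>m\<in>Msub \<M> F i. set (snd m) \<inter> W \<noteq> {}) \<and>
          cond_prob_hit n W F \<le> \<delta>)"

end

theory Submission
  imports Defs "HOL-Combinatorics.Multiset_Permutations" "HOL-Real_Asymp.Real_Asymp"
begin

(*
  Conditioned on F being a member of a uniformly random full chain, the part of the chain
  below F is the chain of prefix sets of a uniformly random permutation of F.  Let i < s and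
  let W1, W2 witness the (i,s,gamma)-badness of F.  By the gap condition, a marked chain
  through F that avoids D*(F,W1) has its s-th member G in W2, with G below F and
  |F - G| >= l(s-i); so D*(F,W1) together with these sets G witnesses lower badness as soon
  as a random chain through F is unlikely to meet it.  With r = 2 sqrt(n ln n), such a chain
  meets D*(F,{B}) only if a fixed element of F - B sits at one of the fewer than 2r positions
  beyond n/2 - r, or an element of F - B comes last: probability at most 4r/|F|.  It contains
  a fixed G with probability 1/binom(|F|,|G|) <= (4l(s-i)/n)^(l(s-i)).  Summing over at most
  |P| sets B and gamma n^(l(s-i)) sets G gives at most 16|P|r/n + gamma (4lq)^(lq), which is
  below delta for gamma = delta / (2 (4lq)^(lq)) and n large.  Complementation S |-> [n] - S
  maps full chains to full chains and turns U* into D*, which gives the case i > s.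
*)

section \<open>Full chains as prefix chains of permutations\<close>

lemma card_permutations_prefix_split:
  assumes "finite U" "A \<subseteq> U"
  shows "card {xs \<in> permutations_of_set U. set (take (card A) xs) = A \<and>
                 P (take (card A) xs) \<and> Q (drop (card A) xs)}
       = card {ys \<in> permutations_of_set A. P ys} * card {zs \<in> permutations_of_set (U - A). Q zs}"
    (is "card ?L = card ?P * card ?Q")
proof -
  let ?app = "\<lambda>(ys, zs). ys @ zs"
  have len: "length ys = card A" if "ys \<in> permutations_of_set A" for ys
    using that by (rule length_finite_permutations_of_set)
  have "?L = ?app ` (?P \<times> ?Q)"
  proof (intro equalityI subsetI)
    fix xs assume xs: "xs \<in> ?L"
    then have "distinct xs" "set xs = U" by (auto dest: permutations_of_setD)
    then have "set (take (card A) xs) \<inter> set (drop (card A) xs) = {}"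
      and "set (take (card A) xs) \<union> set (drop (card A) xs) = U"
      by (metis append_take_drop_id distinct_append, metis append_take_drop_id set_append)
    then have "set (drop (card A) xs) = U - A" using xs by auto
    with xs have "(take (card A) xs, drop (card A) xs) \<in> ?P \<times> ?Q"
      by (auto simp: permutations_of_set_def)
    then show "xs \<in> ?app ` (?P \<times> ?Q)"
      by (auto intro: image_eqI[where x = "(take (card A) xs, drop (card A) xs)"])
  next
    fix xs assume "xs \<in> ?app ` (?P \<times> ?Q)"
    then obtain ys zs where "xs = ys @ zs" "ys \<in> ?P" "zs \<in> ?Q" by auto
    with len assms show "xs \<in> ?L" by (auto simp: permutations_of_set_def)
  qed
  moreover have "inj_on ?app (?P \<times> ?Q)"
    by (rule inj_onI) (use len in \<open>auto simp: append_eq_append_conv\<close>)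
  ultimately show ?thesis by (simp add: card_image card_cartesian_product)
qed

lemma card_permutations_prefix:
  assumes "finite U" "A \<subseteq> U"
  shows "card {xs \<in> permutations_of_set U. set (take (card A) xs) = A}
       = fact (card A) * fact (card U - card A)"
  using card_permutations_prefix_split[OF assms, of "\<lambda>_. True" "\<lambda>_. True"] assms
  by (simp add: card_Diff_subset finite_subset)

lemma card_permutations_nth:
  assumes "finite A" "y \<in> A" "j < card A"
  shows "card {ys \<in> permutations_of_set A. ys ! j = y} = fact (card A - 1)"
proof -
  let ?ins = "\<lambda>zs. take j zs @ y # drop j zs"
  have len: "length zs = card A - 1" if "zs \<in> permutations_of_set (A - {y})" for zs
    using length_finite_permutations_of_set[OF that] assms by simp
  have "{ys \<in> permutations_of_set A. ys ! j = y} = ?ins ` permutations_of_set (A - {y})"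
  proof (intro equalityI subsetI)
    fix ys assume ys: "ys \<in> {ys \<in> permutations_of_set A. ys ! j = y}"
    then have d: "distinct ys" "set ys = A" "ys ! j = y" by (auto dest: permutations_of_setD)
    have "j < length ys" using ys assms length_finite_permutations_of_set by fastforce
    then have ys_eq: "ys = take j ys @ y # drop (Suc j) ys" using d(3) by (metis id_take_nth_drop)
    let ?zs = "take j ys @ drop (Suc j) ys"
    have "distinct (take j ys @ y # drop (Suc j) ys)" using d(1) ys_eq by metis
    then have "distinct ?zs" "y \<notin> set ?zs" by auto
    moreover have "set ys = insert y (set ?zs)"
      using ys_eq by (metis set_append list.simps(15) Un_insert_right)
    moreover have "?ins ?zs = ys" using ys_eq \<open>j < length ys\<close> by (simp add: min_def)
    ultimately show "ys \<in> ?ins ` permutations_of_set (A - {y})"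
      using d(2) by (auto intro!: image_eqI[where x = ?zs])
  next
    fix ys assume "ys \<in> ?ins ` permutations_of_set (A - {y})"
    then obtain zs where zs: "zs \<in> permutations_of_set (A - {y})" "ys = ?ins zs" by auto
    then have "distinct (take j zs @ drop j zs)" "set (take j zs @ drop j zs) = A - {y}"
      by (auto dest: permutations_of_setD)
    then have "distinct ys" "set ys = A" using zs(2) assms(2)
      by (auto simp del: append_take_drop_id)
    moreover have "ys ! j = y" using zs len assms(3) by (simp add: nth_append min_def)
    ultimately show "ys \<in> {ys \<in> permutations_of_set A. ys ! j = y}" by auto
  qed
  moreover have "inj_on ?ins (permutations_of_set (A - {y}))"
  proof (rule inj_onI)
    fix a b assume "a \<in> permutations_of_set (A - {y})" "b \<in> permutations_of_set (A - {y})"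
      and "?ins a = ?ins b"
    then have "take j a = take j b \<and> drop j a = drop j b"
      using len by (simp add: append_eq_append_conv)
    then show "a = b" by (metis append_take_drop_id)
  qed
  ultimately have "card {ys \<in> permutations_of_set A. ys ! j = y}
      = card (permutations_of_set (A - {y}))"
    by (simp add: card_image)
  then show ?thesis using assms by simp
qed

definition prefix_chain :: "'a list \<Rightarrow> 'a set set" where
  "prefix_chain xs = {set (take k xs) | k. k \<le> length xs}"

lemma prefix_chain_take: "prefix_chain (take j xs) = {S \<in> prefix_chain xs. S \<subseteq> set (take j xs)}"
proof (intro equalityI subsetI)
  fix S assume "S \<in> prefix_chain (take j xs)"
  then obtain k where "S = set (take (min k j) xs)" "k \<le> length (take j xs)"
    unfolding prefix_chain_def by auto
  moreover have "set (take (min k j) xs) \<subseteq> set (take j xs)"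
    by (rule set_take_subset_set_take) simp
  ultimately show "S \<in> {S \<in> prefix_chain xs. S \<subseteq> set (take j xs)}"
    unfolding prefix_chain_def by auto
next
  fix S assume "S \<in> {S \<in> prefix_chain xs. S \<subseteq> set (take j xs)}"
  then obtain k where S: "S = set (take k xs)" "k \<le> length xs" "S \<subseteq> set (take j xs)"
    unfolding prefix_chain_def by auto
  show "S \<in> prefix_chain (take j xs)"
  proof (cases "k \<le> j")
    case True
    then have "S = set (take k (take j xs))" "k \<le> length (take j xs)" using S by auto
    then show ?thesis unfolding prefix_chain_def by blast
  next
    case False
    then have "S = set (take (length (take j xs)) (take j xs))"
      using S set_take_subset_set_take[of j k xs] by auto
    then show ?thesis unfolding prefix_chain_def by blast
  qed
qed

lemma card_set_take: "distinct xs \<Longrightarrow> card (set (take k xs)) = min k (length xs)"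
  by (simp add: distinct_card)

lemma prefix_chain_card_eq:
  assumes "distinct xs" "S \<in> prefix_chain xs" "card S = k"
  shows "S = set (take k xs)"
proof -
  obtain i where "S = set (take i xs)" "i \<le> length xs"
    using assms(2) unfolding prefix_chain_def by blast
  moreover have "card (set (take i xs)) = i" using card_set_take[OF assms(1)] calculation(2) by simp
  ultimately show ?thesis using assms(3) by simp
qed

lemma mem_prefix_chain_iff:
  assumes "distinct xs" "F \<subseteq> set xs"
  shows "F \<in> prefix_chain xs \<longleftrightarrow> set (take (card F) xs) = F"
proof
  assume "set (take (card F) xs) = F"
  moreover have "card F \<le> length xs"
    using card_mono[OF _ assms(2)] distinct_card[OF assms(1)] by simp
  ultimately show "F \<in> prefix_chain xs" unfolding prefix_chain_def by force
qed (use prefix_chain_card_eq[OF assms(1)] in simp)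

lemma set_take_Suc_diff:
  assumes "distinct xs" "i < length xs"
  shows "set (take (Suc i) xs) - set (take i xs) = {xs ! i}"
proof -
  have "distinct (take (Suc i) xs)" using assms(1) by simp
  then have "distinct (take i xs @ [xs ! i])" by (simp only: take_Suc_conv_app_nth[OF assms(2)])
  then show ?thesis using assms by (auto simp: take_Suc_conv_app_nth)
qed

lemma full_chain_prefix_chain:
  assumes "xs \<in> permutations_of_set {1..n}"
  shows "full_chain n (prefix_chain xs)"
proof -
  have xs: "distinct xs" "set xs = {1..n}" "length xs = n"
    using assms length_finite_permutations_of_set[OF assms] by (auto dest: permutations_of_setD)
  have "A \<subseteq> B \<or> B \<subseteq> A" if AB: "A \<in> prefix_chain xs" "B \<in> prefix_chain xs" for A B
  proof -
    obtain i j where "A = set (take i xs)" "B = set (take j xs)"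
      using AB unfolding prefix_chain_def by blast
    then show ?thesis
      using set_take_subset_set_take[of i j xs] set_take_subset_set_take[of j i xs]
      by (cases "i \<le> j") auto
  qed
  moreover have "set (take k xs) \<in> prefix_chain xs \<and> card (set (take k xs)) = k" if "k \<le> n" for k
  proof
    show "set (take k xs) \<in> prefix_chain xs" using that xs(3) unfolding prefix_chain_def by blast
    show "card (set (take k xs)) = k" using that xs(3) card_set_take[OF xs(1), of k] by simp
  qed
  moreover have "prefix_chain xs \<subseteq> Pow {1..n}"
    using xs unfolding prefix_chain_def by (auto dest: in_set_takeD)
  ultimately show ?thesis unfolding full_chain_def by blast
qed

lemma inj_on_prefix_chain: "inj_on prefix_chain (permutations_of_set A)"
proof (rule inj_onI)
  fix xs ys assume xs: "xs \<in> permutations_of_set A" and ys: "ys \<in> permutations_of_set A"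
    and eq: "prefix_chain xs = prefix_chain ys"
  have d: "distinct xs" "distinct ys" and len: "length xs = length ys"
    using xs ys by (auto dest: permutations_of_setD simp: length_finite_permutations_of_set)
  have take_eq: "set (take k xs) = set (take k ys)" if "k \<le> length xs" for k
  proof -
    have "set (take k xs) \<in> prefix_chain ys" using eq that unfolding prefix_chain_def by auto
    moreover have "card (set (take k xs)) = k" using card_set_take[OF d(1), of k] that by simp
    ultimately show ?thesis by (rule prefix_chain_card_eq[OF d(2)])
  qed
  show "xs = ys"
  proof (rule nth_equalityI[OF len])
    fix i assume i: "i < length xs"
    have "{xs ! i} = set (take (Suc i) ys) - set (take i ys)"
      using set_take_Suc_diff[OF d(1) i] take_eq[of i] take_eq[of "Suc i"] i by simp
    also have "\<dots> = {ys ! i}" using set_take_Suc_diff[OF d(2)] i len by simp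
    finally show "xs ! i = ys ! i" by simp
  qed
qed

lemma full_chain_finite_comparable:
  assumes "full_chain n \<chi>" "A \<in> \<chi>" "B \<in> \<chi>"
  shows "finite A" "A \<subseteq> B \<or> B \<subseteq> A"
proof -
  have "A \<subseteq> {1..n}" using assms unfolding full_chain_def by blast
  then show "finite A" by (rule finite_subset) simp
  show "A \<subseteq> B \<or> B \<subseteq> A" using assms unfolding full_chain_def by blast
qed

lemma full_chain_card_inj:
  assumes "full_chain n \<chi>" "A \<in> \<chi>" "B \<in> \<chi>" "card A = card B"
  shows "A = B"
  using full_chain_finite_comparable[OF assms(1-3)] full_chain_finite_comparable[OF assms(1,3,2)]
    card_subset_eq assms(4) by metis

lemma full_chain_insert:
  assumes "full_chain n \<chi>" "A \<in> \<chi>" "B \<in> \<chi>" "card B = Suc (card A)"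
  obtains a where "a \<notin> A" "B = insert a A"
proof -
  have fin: "finite A" "finite B" and "A \<subseteq> B \<or> B \<subseteq> A"
    using full_chain_finite_comparable[OF assms(1-3)] full_chain_finite_comparable[OF assms(1,3,2)]
    by blast+
  moreover have "\<not> B \<subseteq> A"
  proof
    assume "B \<subseteq> A"
    then have "card B \<le> card A" by (rule card_mono[OF fin(1)])
    then show False using assms(4) by simp
  qed
  ultimately have "A \<subseteq> B" by blast
  then have "card (B - A) = 1" using fin assms(4) by (simp add: card_Diff_subset)
  then obtain a where "B - A = {a}" by (rule card_1_singletonE)
  then show ?thesis using that \<open>A \<subseteq> B\<close> by blast
qed

lemma set_take_map_upt:
  assumes "A 0 = {}" "\<And>k. k < n \<Longrightarrow> A (Suc k) = insert (a k) (A k)" "k \<le> n"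
  shows "set (take k (map a [0..<n])) = A k"
  using assms(3)
proof (induction k)
  case (Suc k)
  then show ?case using assms(2)[of k] by (simp add: take_Suc_conv_app_nth)
qed (simp add: assms(1))

lemma full_chain_prefix_chainE:
  assumes "full_chain n \<chi>"
  obtains xs where "xs \<in> permutations_of_set {1..n}" "\<chi> = prefix_chain xs"
proof -
  have sub: "\<chi> \<subseteq> Pow {1..n}" using assms unfolding full_chain_def by auto
  have "\<forall>k. \<exists>A. k \<le> n \<longrightarrow> A \<in> \<chi> \<and> card A = k"
    using assms unfolding full_chain_def by blast
  then obtain A where A: "\<And>k. k \<le> n \<Longrightarrow> A k \<in> \<chi> \<and> card (A k) = k"
    using choice[of "\<lambda>k A. k \<le> n \<longrightarrow> A \<in> \<chi> \<and> card A = k"] by blast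
  have "\<exists>a. a \<notin> A k \<and> A (Suc k) = insert a (A k)" if "k < n" for k
  proof -
    have "A k \<in> \<chi>" "A (Suc k) \<in> \<chi>" "card (A (Suc k)) = Suc (card (A k))"
      using A[of k] A[of "Suc k"] that by auto
    then obtain a where "a \<notin> A k" "A (Suc k) = insert a (A k)" by (rule full_chain_insert[OF assms])
    then show ?thesis by blast
  qed
  then have "\<forall>k. \<exists>a. k < n \<longrightarrow> a \<notin> A k \<and> A (Suc k) = insert a (A k)" by blast
  then obtain a where a: "\<And>k. k < n \<Longrightarrow> a k \<notin> A k \<and> A (Suc k) = insert (a k) (A k)"
    using choice[of "\<lambda>k a. k < n \<longrightarrow> a \<notin> A k \<and> A (Suc k) = insert a (A k)"] by blast
  define xs where "xs = map a [0..<n]"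
  have "A 0 = {}" using A[of 0] sub finite_subset[of "A 0" "{1..n}"] by auto
  then have take_xs: "set (take k xs) = A k" if "k \<le> n" for k
    unfolding xs_def using a that by (intro set_take_map_upt) auto
  have "length xs = n" by (simp add: xs_def)
  moreover have "set xs = {1..n}"
    using take_xs[of n] A[of n] sub card_subset_eq[of "{1..n}" "A n"] \<open>length xs = n\<close> by auto
  moreover from calculation have "distinct xs" by (intro card_distinct) simp
  ultimately have "xs \<in> permutations_of_set {1..n}" by blast
  moreover have "\<chi> = prefix_chain xs"
  proof (intro equalityI subsetI)
    fix C assume "C \<in> \<chi>"
    moreover have "card C \<le> n" using sub \<open>C \<in> \<chi>\<close> card_mono[of "{1..n}" C] by auto
    ultimately have "C = set (take (card C) xs)"
      using A[of "card C"] take_xs[of "card C"] full_chain_card_inj[OF assms, of C] by simp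
    then show "C \<in> prefix_chain xs"
      using \<open>card C \<le> n\<close> \<open>length xs = n\<close> unfolding prefix_chain_def by blast
  next
    fix C assume "C \<in> prefix_chain xs"
    then show "C \<in> \<chi>" using take_xs A \<open>length xs = n\<close> unfolding prefix_chain_def by auto
  qed
  ultimately show ?thesis using that by blast
qed

lemma bij_betw_prefix_chain: "bij_betw prefix_chain (permutations_of_set {1..n}) (full_chains n)"
proof (rule bij_betw_imageI)
  show "inj_on prefix_chain (permutations_of_set {1..n})" by (rule inj_on_prefix_chain)
  show "prefix_chain ` permutations_of_set {1..n} = full_chains n"
  proof (intro equalityI subsetI)
    fix \<chi> assume "\<chi> \<in> full_chains n"
    then obtain xs where "xs \<in> permutations_of_set {1..n}" "\<chi> = prefix_chain xs"
      unfolding full_chains_def by (auto elim: full_chain_prefix_chainE)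
    then show "\<chi> \<in> prefix_chain ` permutations_of_set {1..n}" by blast
  qed (auto simp: full_chains_def full_chain_prefix_chain)
qed

section \<open>Hitting probabilities of random full chains\<close>

lemma finite_full_chains: "finite (full_chains n)"
proof (rule finite_subset)
  show "full_chains n \<subseteq> Pow (Pow {1..n})" unfolding full_chains_def full_chain_def by auto
qed simp

lemma card_Collect_bij_betw:
  assumes "bij_betw h A B" "\<And>x. x \<in> A \<Longrightarrow> Q (h x) \<longleftrightarrow> P x"
  shows "card {x \<in> A. P x} = card {y \<in> B. Q y}"
  using bij_betw_same_card[OF bij_betw_Collect[of h A B Q P]] assms by blast

lemma cond_prob_hit_mono:
  assumes "W \<subseteq> W'"
  shows "cond_prob_hit n W F \<le> cond_prob_hit n W' F"
  unfolding cond_prob_hit_def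
proof (rule divide_right_mono)
  show "real (card {\<chi> \<in> full_chains n. F \<in> \<chi> \<and> \<chi> \<inter> W \<noteq> {}})
      \<le> real (card {\<chi> \<in> full_chains n. F \<in> \<chi> \<and> \<chi> \<inter> W' \<noteq> {}})"
    using assms finite_full_chains by (auto intro!: card_mono)
qed simp

lemma cond_prob_hit_Un_le:
  "cond_prob_hit n (W \<union> W') F \<le> cond_prob_hit n W F + cond_prob_hit n W' F"
proof -
  have "{\<chi> \<in> full_chains n. F \<in> \<chi> \<and> \<chi> \<inter> (W \<union> W') \<noteq> {}}
      = {\<chi> \<in> full_chains n. F \<in> \<chi> \<and> \<chi> \<inter> W \<noteq> {}}
        \<union> {\<chi> \<in> full_chains n. F \<in> \<chi> \<and> \<chi> \<inter> W' \<noteq> {}}"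
    by blast
  then have "card {\<chi> \<in> full_chains n. F \<in> \<chi> \<and> \<chi> \<inter> (W \<union> W') \<noteq> {}}
      \<le> card {\<chi> \<in> full_chains n. F \<in> \<chi> \<and> \<chi> \<inter> W \<noteq> {}}
         + card {\<chi> \<in> full_chains n. F \<in> \<chi> \<and> \<chi> \<inter> W' \<noteq> {}}"
    by (simp add: card_Un_le)
  then show ?thesis
    unfolding cond_prob_hit_def add_divide_distrib[symmetric] by (intro divide_right_mono) simp_all
qed

lemma cond_prob_hit_UN_le:
  assumes "finite I"
  shows "cond_prob_hit n (\<Union>i\<in>I. W i) F \<le> (\<Sum>i\<in>I. cond_prob_hit n (W i) F)"
proof -
  have "{\<chi> \<in> full_chains n. F \<in> \<chi> \<and> \<chi> \<inter> (\<Union>i\<in>I. W i) \<noteq> {}}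
      = (\<Union>i\<in>I. {\<chi> \<in> full_chains n. F \<in> \<chi> \<and> \<chi> \<inter> W i \<noteq> {}})"
    by blast
  then have "card {\<chi> \<in> full_chains n. F \<in> \<chi> \<and> \<chi> \<inter> (\<Union>i\<in>I. W i) \<noteq> {}}
      \<le> (\<Sum>i\<in>I. card {\<chi> \<in> full_chains n. F \<in> \<chi> \<and> \<chi> \<inter> W i \<noteq> {}})"
    using card_UN_le[OF assms] by simp
  then show ?thesis
    unfolding cond_prob_hit_def sum_divide_distrib[symmetric]
    by (intro divide_right_mono) (simp_all flip: of_nat_sum)
qed

lemma full_chain_complement:
  assumes "full_chain n \<chi>"
  shows "full_chain n ((-) {1..n} ` \<chi>)"
  unfolding full_chain_def
proof (intro conjI allI impI)
  show "(-) {1..n} ` \<chi> \<subseteq> Pow {1..n}" by auto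
  show "\<forall>A\<in>(-) {1..n} ` \<chi>. \<forall>B\<in>(-) {1..n} ` \<chi>. A \<subseteq> B \<or> B \<subseteq> A"
    using assms unfolding full_chain_def by blast
  fix k assume "k \<le> n"
  then obtain A where "A \<in> \<chi>" "card A = n - k"
    using assms unfolding full_chain_def by (meson diff_le_self)
  moreover have "A \<subseteq> {1..n}" using assms \<open>A \<in> \<chi>\<close> unfolding full_chain_def by blast
  ultimately show "\<exists>A\<in>(-) {1..n} ` \<chi>. card A = k"
    using \<open>k \<le> n\<close>
    by (intro bexI[where x = "{1..n} - A"]) (auto simp: card_Diff_subset finite_subset)
qed

lemma complement_complement_image: "X \<subseteq> Pow U \<Longrightarrow> (-) U ` (-) U ` X = X"
  by (force simp: image_image double_diff)

lemma bij_betw_complement_full_chains: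
  "bij_betw ((`) ((-) {1..n})) (full_chains n) (full_chains n)"
proof (rule bij_betw_byWitness)
  have "\<chi> \<subseteq> Pow {1..n}" if "\<chi> \<in> full_chains n" for \<chi>
    using that unfolding full_chains_def full_chain_def by blast
  then show "\<forall>\<chi>\<in>full_chains n. (-) {1..n} ` (-) {1..n} ` \<chi> = \<chi>"
    by (simp add: complement_complement_image)
  then show "\<forall>\<chi>\<in>full_chains n. (-) {1..n} ` (-) {1..n} ` \<chi> = \<chi>" .
  show "(`) ((-) {1..n}) ` full_chains n \<subseteq> full_chains n"
    unfolding full_chains_def using full_chain_complement by blast
  then show "(`) ((-) {1..n}) ` full_chains n \<subseteq> full_chains n" .
qed

lemma cond_prob_hit_complement:
  assumes "F \<subseteq> {1..n}" "W \<subseteq> Pow {1..n}"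
  shows "cond_prob_hit n ((-) {1..n} ` W) ({1..n} - F) = cond_prob_hit n W F"
proof -
  let ?C = "(`) ((-) {1..n})"
  have inj: "inj_on ((-) {1..n}) (Pow {1..n})" by (rule inj_onI) (auto simp: double_diff)
  \<comment> \<open>\<open>Q = False\<close> gives the numerator of \<open>cond_prob_hit\<close>, \<open>Q = True\<close> the denominator.\<close>
  have "card {\<chi> \<in> full_chains n. F \<in> \<chi> \<and> (\<chi> \<inter> W \<noteq> {} \<or> Q)}
      = card {\<chi> \<in> full_chains n. {1..n} - F \<in> \<chi> \<and> (\<chi> \<inter> ?C W \<noteq> {} \<or> Q)}" for Q
  proof (rule card_Collect_bij_betw[OF bij_betw_complement_full_chains])
    fix \<chi> assume "\<chi> \<in> full_chains n"
    then have \<chi>: "\<chi> \<subseteq> Pow {1..n}" unfolding full_chains_def full_chain_def by blast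
    have "{1..n} - F \<in> ?C \<chi> \<longleftrightarrow> F \<in> \<chi>"
      by (rule inj_on_image_mem_iff[OF inj]) (use assms(1) \<chi> in auto)
    moreover have "?C \<chi> \<inter> ?C W = ?C (\<chi> \<inter> W)"
      by (rule inj_on_image_Int[OF inj \<chi> assms(2), symmetric])
    ultimately show "{1..n} - F \<in> ?C \<chi> \<and> (?C \<chi> \<inter> ?C W \<noteq> {} \<or> Q) \<longleftrightarrow> F \<in> \<chi> \<and> (\<chi> \<inter> W \<noteq> {} \<or> Q)"
      by simp
  qed
  from this[of False] this[of True] show ?thesis unfolding cond_prob_hit_def by simp
qed

lemma cond_prob_hit_below:
  assumes "F \<subseteq> {1..n}" "\<forall>D\<in>W. D \<subseteq> F"
  shows "cond_prob_hit n W F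
       = card {ys \<in> permutations_of_set F. prefix_chain ys \<inter> W \<noteq> {}} / fact (card F)"
proof -
  let ?U = "{1..n}" and ?f = "card F"
  have prefix_iff: "F \<in> prefix_chain xs \<longleftrightarrow> set (take ?f xs) = F"
    if "xs \<in> permutations_of_set ?U" for xs
    using that assms(1) by (intro mem_prefix_chain_iff) (auto dest: permutations_of_setD)
  have hit_iff: "prefix_chain xs \<inter> W \<noteq> {} \<longleftrightarrow> prefix_chain (take ?f xs) \<inter> W \<noteq> {}"
    if "set (take ?f xs) = F" for xs
  proof -
    have "prefix_chain (take ?f xs) = {S \<in> prefix_chain xs. S \<subseteq> F}"
      using prefix_chain_take[of ?f xs] that by simp
    then show ?thesis using assms(2) by blast
  qed
  have "card {\<chi> \<in> full_chains n. F \<in> \<chi> \<and> \<chi> \<inter> W \<noteq> {}}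
      = card {xs \<in> permutations_of_set ?U. set (take ?f xs) = F \<and>
                 prefix_chain (take ?f xs) \<inter> W \<noteq> {} \<and> True}"
    by (rule card_Collect_bij_betw[OF bij_betw_prefix_chain, symmetric])
      (use prefix_iff hit_iff in blast)
  also have "\<dots> = card {ys \<in> permutations_of_set F. prefix_chain ys \<inter> W \<noteq> {}} * fact (n - ?f)"
    using assms(1)
    by (subst card_permutations_prefix_split) (auto simp: card_Diff_subset finite_subset)
  finally have num: "card {\<chi> \<in> full_chains n. F \<in> \<chi> \<and> \<chi> \<inter> W \<noteq> {}}
      = card {ys \<in> permutations_of_set F. prefix_chain ys \<inter> W \<noteq> {}} * fact (n - ?f)" .
  have "card {\<chi> \<in> full_chains n. F \<in> \<chi>} = card {xs \<in> permutations_of_set ?U. set (take ?f xs) = F}"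
    by (rule card_Collect_bij_betw[OF bij_betw_prefix_chain, symmetric]) (use prefix_iff in blast)
  also have "\<dots> = fact ?f * fact (n - ?f)"
    using assms(1) card_permutations_prefix[of ?U F] by simp
  finally have den: "card {\<chi> \<in> full_chains n. F \<in> \<chi>} = fact ?f * fact (n - ?f)" .
  show ?thesis unfolding cond_prob_hit_def num den by simp
qed

lemma card_permutations_nth_UN_le:
  assumes "finite F" "finite I" "\<And>i. i \<in> I \<Longrightarrow> j i < card F \<and> x i \<in> F"
  shows "card (\<Union>i\<in>I. {ys \<in> permutations_of_set F. ys ! j i = x i}) \<le> card I * fact (card F - 1)"
proof -
  have "card (\<Union>i\<in>I. {ys \<in> permutations_of_set F. ys ! j i = x i})
      \<le> (\<Sum>i\<in>I. card {ys \<in> permutations_of_set F. ys ! j i = x i})"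
    by (rule card_UN_le[OF assms(2)])
  also have "\<dots> = (\<Sum>i\<in>I. fact (card F - 1))"
  proof (rule sum.cong[OF refl])
    fix i assume "i \<in> I"
    then show "card {ys \<in> permutations_of_set F. ys ! j i = x i} = fact (card F - 1)"
      using assms(3)[OF \<open>i \<in> I\<close>] by (intro card_permutations_nth[OF assms(1)]) auto
  qed
  finally show ?thesis by simp
qed

lemma cond_prob_hit_le_positions:
  assumes "F \<subseteq> {1..n}" "\<forall>D\<in>W. D \<subseteq> F" "finite I"
    and pos: "\<And>i. i \<in> I \<Longrightarrow> j i < card F \<and> x i \<in> F"
    and cover: "\<And>ys. ys \<in> permutations_of_set F \<Longrightarrow> prefix_chain ys \<inter> W \<noteq> {} \<Longrightarrow>
                  \<exists>i\<in>I. ys ! j i = x i"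
  shows "cond_prob_hit n W F \<le> card I / card F"
proof -
  have fin: "finite F" using assms(1) finite_subset by blast
  have "{ys \<in> permutations_of_set F. prefix_chain ys \<inter> W \<noteq> {}}
      \<subseteq> (\<Union>i\<in>I. {ys \<in> permutations_of_set F. ys ! j i = x i})"
    using cover by blast
  then have "card {ys \<in> permutations_of_set F. prefix_chain ys \<inter> W \<noteq> {}}
      \<le> card (\<Union>i\<in>I. {ys \<in> permutations_of_set F. ys ! j i = x i})"
    by (rule card_mono[rotated]) (simp add: assms(3))
  also have "\<dots> \<le> card I * fact (card F - 1)"
    by (rule card_permutations_nth_UN_le[OF fin assms(3) pos])
  finally have "real (card {ys \<in> permutations_of_set F. prefix_chain ys \<inter> W \<noteq> {}})
      \<le> real (card I * fact (card F - 1))"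
    by (rule of_nat_mono)
  then have hits: "real (card {ys \<in> permutations_of_set F. prefix_chain ys \<inter> W \<noteq> {}})
      \<le> real (card I) * fact (card F - 1)"
    by simp
  have "cond_prob_hit n W F
      = card {ys \<in> permutations_of_set F. prefix_chain ys \<inter> W \<noteq> {}} / fact (card F)"
    by (rule cond_prob_hit_below[OF assms(1,2)])
  also have "\<dots> \<le> real (card I) * fact (card F - 1) / fact (card F)"
    by (rule divide_right_mono[OF hits]) simp
  also have "\<dots> = card I / card F"
  proof (cases "card F = 0")
    case True
    then have "I = {}" using pos by fastforce
    then show ?thesis by simp
  next
    case False
    then have "(fact (card F) :: real) = real (card F) * fact (card F - 1)"
      by (intro fact_reduce) simp
    then show ?thesis by simp
  qed
  finally show ?thesis .
qed

lemma cond_prob_hit_singleton: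
  assumes "G \<subseteq> F" "F \<subseteq> {1..n}"
  shows "cond_prob_hit n {G} F = 1 / (card F choose card G)"
proof -
  have fin: "finite F" using assms(2) finite_subset by blast
  have "prefix_chain ys \<inter> {G} \<noteq> {} \<longleftrightarrow> set (take (card G) ys) = G"
    if "ys \<in> permutations_of_set F" for ys
    using mem_prefix_chain_iff[of ys G] permutations_of_setD[OF that] assms(1) by auto
  then have "{ys \<in> permutations_of_set F. prefix_chain ys \<inter> {G} \<noteq> {}}
      = {ys \<in> permutations_of_set F. set (take (card G) ys) = G}"
    by blast
  then have "cond_prob_hit n {G} F = fact (card G) * fact (card F - card G) / fact (card F)"
    using card_permutations_prefix[OF fin assms(1)] cond_prob_hit_below[of F n "{G}"] assms by simp
  also have "\<dots> = 1 / (card F choose card G)"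
    using card_mono[OF fin assms(1)] by (simp add: binomial_fact)
  finally show ?thesis .
qed

lemma card_Collect_greater_less:
  assumes "a \<le> real f"
  shows "real (card {j. j < f \<and> a < real j}) \<le> real f - a"
proof (cases "a < 0")
  case True
  have "card {j. j < f \<and> a < real j} \<le> card {..<f}" by (rule card_mono) auto
  then show ?thesis using True by simp
next
  case False
  define c where "c = nat (\<lfloor>a\<rfloor> + 1)"
  have "{j. j < f \<and> a < real j} \<subseteq> {c..<f}" unfolding c_def by auto linarith
  then have "card {j. j < f \<and> a < real j} \<le> f - c" using card_mono[of "{c..<f}"] by fastforce
  moreover have "a < real c" unfolding c_def using False by linarith
  ultimately show ?thesis using assms by linarith
qed

lemma cond_prob_hit_large_subsets:
  assumes "F \<subseteq> {1..n}" "\<not> F \<subseteq> B" "a \<le> real (card F)"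
  shows "cond_prob_hit n {S. S \<subseteq> F \<and> S \<subseteq> B \<and> a < real (card S)} F
       \<le> (real (card F) - a) / real (card F)"
proof -
  obtain x where x: "x \<in> F" "x \<notin> B" using assms(2) by blast
  let ?I = "{j. j < card F \<and> a < real j}"
  have "cond_prob_hit n {S. S \<subseteq> F \<and> S \<subseteq> B \<and> a < real (card S)} F \<le> card ?I / card F"
  proof (rule cond_prob_hit_le_positions[where j = id and x = "\<lambda>_. x"])
    fix ys assume ys: "ys \<in> permutations_of_set F"
      and "prefix_chain ys \<inter> {S. S \<subseteq> F \<and> S \<subseteq> B \<and> a < real (card S)} \<noteq> {}"
    then obtain k where k: "k \<le> length ys" "set (take k ys) \<subseteq> B" "a < real (card (set (take k ys)))"
      unfolding prefix_chain_def by blast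
    have d: "distinct ys" "set ys = F" "length ys = card F"
      using ys by (auto dest: permutations_of_setD simp: length_finite_permutations_of_set)
    obtain i where i: "i < length ys" "ys ! i = x" using x(1) d(2) by (metis in_set_conv_nth)
    have "k \<le> i"
    proof (rule ccontr)
      assume "\<not> k \<le> i"
      then have "take k ys ! i \<in> set (take k ys)" using i(1) by (intro nth_mem) simp
      then have "x \<in> set (take k ys)" using i \<open>\<not> k \<le> i\<close> by simp
      then show False using k(2) x(2) by blast
    qed
    moreover have "card (set (take k ys)) = k" using card_set_take[OF d(1)] k(1) by simp
    ultimately show "\<exists>i\<in>?I. ys ! id i = x" using i k(3) d(3) by force
  qed (use assms(1) x in auto)
  also have "\<dots> \<le> (real (card F) - a) / real (card F)"
    by (rule divide_right_mono[OF card_Collect_greater_less[OF assms(3)]]) simp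
  finally show ?thesis .
qed

lemma cond_prob_hit_between:
  assumes "F \<subseteq> {1..n}"
  shows "cond_prob_hit n {S. B \<subseteq> S \<and> S \<subset> F} F \<le> real (card F - card B) / real (card F)"
proof (cases "B \<subseteq> F")
  case False
  then have "{S. B \<subseteq> S \<and> S \<subset> F} = {}" by blast
  moreover have "cond_prob_hit n {} F = 0" by (simp add: cond_prob_hit_def)
  ultimately show ?thesis by (metis divide_nonneg_nonneg of_nat_0_le_iff)
next
  case True
  have fin: "finite F" using assms finite_subset by blast
  have last_pos: "card F - 1 < card F" if "y \<in> F" for y
  proof -
    have "card F \<noteq> 0" using that fin by auto
    then show ?thesis by simp
  qed
  have "cond_prob_hit n {S. B \<subseteq> S \<and> S \<subset> F} F \<le> card (F - B) / card F"
  proof (rule cond_prob_hit_le_positions[where j = "\<lambda>_. card F - 1" and x = id])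
    fix ys assume ys: "ys \<in> permutations_of_set F" and "prefix_chain ys \<inter> {S. B \<subseteq> S \<and> S \<subset> F} \<noteq> {}"
    then obtain k where k: "B \<subseteq> set (take k ys)" "set (take k ys) \<subset> F"
      unfolding prefix_chain_def by blast
    have d: "distinct ys" "set ys = F" "length ys = card F"
      using ys by (auto dest: permutations_of_setD simp: length_finite_permutations_of_set)
    have "k < card F"
    proof (rule ccontr)
      assume "\<not> k < card F"
      then have "set (take k ys) = F" using d by simp
      then show False using k(2) by simp
    qed
    then have last: "card F - 1 < length ys" "set (take k ys) \<subseteq> set (take (card F - 1) ys)"
      using d(3) set_take_subset_set_take[of k "card F - 1" ys] by auto
    have "ys ! (card F - 1) \<notin> set (take (card F - 1) ys)"
      using set_take_Suc_diff[OF d(1) last(1)] by auto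
    moreover have "ys ! (card F - 1) \<in> F" using last(1) d(2) nth_mem by blast
    ultimately show "\<exists>y\<in>F - B. ys ! (card F - 1) = id y" using k(1) last(2) by auto
  qed (use assms fin last_pos in auto)
  also have "\<dots> = real (card F - card B) / real (card F)"
    using True fin by (simp add: card_Diff_subset finite_subset)
  finally show ?thesis .
qed

section \<open>Chains through the middle layer\<close>

definition Btilde_radius :: "nat \<Rightarrow> real" where
  "Btilde_radius n = 2 * sqrt (real n * ln (real n))"

lemma Btilde_iff:
  "S \<in> Btilde n \<longleftrightarrow> S \<subseteq> {1..n} \<and> \<bar>real (card S) - real n / 2\<bar> < Btilde_radius n"
  unfolding Btilde_def Btilde_radius_def by simp

lemma finite_Btilde: "finite (Btilde n)"
  by (rule finite_subset[of _ "Pow {1..n}"]) (auto simp: Btilde_def)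

lemma Btilde_complement:
  assumes "S \<subseteq> {1..n}"
  shows "{1..n} - S \<in> Btilde n \<longleftrightarrow> S \<in> Btilde n"
proof -
  have "card ({1..n} - S) = n - card S" "card S \<le> n"
    using assms card_mono[OF _ assms] by (simp_all add: card_Diff_subset finite_subset)
  then show ?thesis unfolding Btilde_iff using assms by (simp add: of_nat_diff abs_minus_commute)
qed

lemma cond_prob_hit_Dstar_singleton:
  assumes "F \<in> Btilde n" "B \<in> Btilde n" "\<not> F \<subseteq> B"
  shows "cond_prob_hit n (Dstar n F {B}) F \<le> 4 * Btilde_radius n / card F"
proof -
  let ?r = "Btilde_radius n" and ?f = "card F"
  have F: "F \<subseteq> {1..n}" "\<bar>real ?f - real n / 2\<bar> < ?r" and B: "\<bar>real (card B) - real n / 2\<bar> < ?r"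
    using assms(1,2) unfolding Btilde_iff by auto
  have "Dstar n F {B} \<subseteq> {S. S \<subseteq> F \<and> S \<subseteq> B \<and> real n / 2 - ?r < real (card S)} \<union> {S. B \<subseteq> S \<and> S \<subset> F}"
    by (auto simp: Dstar_def Down_def Comp_def Btilde_iff abs_less_iff)
  then have "cond_prob_hit n (Dstar n F {B}) F
      \<le> cond_prob_hit n {S. S \<subseteq> F \<and> S \<subseteq> B \<and> real n / 2 - ?r < real (card S)} F
         + cond_prob_hit n {S. B \<subseteq> S \<and> S \<subset> F} F"
    by (meson cond_prob_hit_mono cond_prob_hit_Un_le order_trans)
  also have "\<dots> \<le> (real ?f - (real n / 2 - ?r)) / real ?f + real (?f - card B) / real ?f"
    using F assms(3) by (intro add_mono cond_prob_hit_large_subsets cond_prob_hit_between) auto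
  also have "\<dots> \<le> 2 * ?r / ?f + 2 * ?r / ?f"
    using F B by (intro add_mono divide_right_mono) (auto simp: of_nat_diff)
  finally show ?thesis by simp
qed

lemma cond_prob_hit_Dstar:
  assumes "F \<in> Btilde n" "W \<subseteq> Btilde n" "\<forall>B\<in>W. \<not> F \<subseteq> B"
  shows "cond_prob_hit n (Dstar n F W) F \<le> card W * (4 * Btilde_radius n / card F)"
proof -
  have "Dstar n F W = (\<Union>B\<in>W. Dstar n F {B})" unfolding Dstar_def Comp_def by auto
  moreover have "finite W" using assms(2) finite_Btilde finite_subset by blast
  ultimately have "cond_prob_hit n (Dstar n F W) F \<le> (\<Sum>B\<in>W. cond_prob_hit n (Dstar n F {B}) F)"
    using cond_prob_hit_UN_le by simp
  also have "\<dots> \<le> card W * (4 * Btilde_radius n / card F)"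
    using assms cond_prob_hit_Dstar_singleton by (intro sum_bounded_above) blast
  finally show ?thesis .
qed

lemma inverse_binomial_le:
  assumes "L \<le> g" "L \<le> f - g" "g \<le> f"
  shows "1 / real (f choose g) \<le> (real L / real f) ^ L"
proof -
  have "f choose L \<le> f choose g"
  proof (cases "2 * g \<le> f")
    case True
    then show ?thesis by (rule binomial_mono[OF assms(1)])
  next
    case False
    have "f choose L \<le> f choose (f - g)" using assms(2) False by (intro binomial_mono) auto
    then show ?thesis using binomial_symmetric[OF assms(3)] by simp
  qed
  moreover have "(real f / real L) ^ L \<le> real (f choose L)"
    using assms by (intro binomial_ge_n_over_k_pow_k) simp
  ultimately have le: "(real f / real L) ^ L \<le> real (f choose g)" by linarith
  have "0 < (real f / real L) ^ L"
  proof (cases "L = 0")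
    case False
    then show ?thesis using assms by simp
  qed simp
  then have "1 / real (f choose g) \<le> 1 / (real f / real L) ^ L"
    using le assms(3) by (intro divide_left_mono mult_pos_pos) auto
  then show ?thesis by (simp add: power_divide)
qed

lemma cond_prob_hit_gapped_subsets:
  assumes F: "F \<in> Btilde n" and W: "W \<subseteq> Btilde n" "\<forall>G\<in>W. G \<subseteq> F \<and> L \<le> card (F - G)"
    and small: "Btilde_radius n \<le> real n / 4" "real L \<le> real n / 4"
  shows "cond_prob_hit n W F \<le> card W * (4 * real L / n) ^ L"
proof -
  let ?r = "Btilde_radius n" and ?f = "card F"
  have Fn: "F \<subseteq> {1..n}" and f: "real n / 4 \<le> real ?f" and n: "0 < real n"
    using F small unfolding Btilde_iff by linarith+
  have single: "cond_prob_hit n {G} F \<le> (4 * real L / n) ^ L" if "G \<in> W" for G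
  proof -
    have G: "G \<subseteq> F" "L \<le> card (F - G)" "real n / 2 - ?r < card G"
      using W that by (auto simp: Btilde_iff abs_less_iff)
    have "finite F" using Fn finite_subset by blast
    then have cG: "card (F - G) = ?f - card G" "card G \<le> ?f"
      using G(1) by (simp_all add: card_Diff_subset finite_subset card_mono)
    have "cond_prob_hit n {G} F = 1 / (?f choose card G)"
      by (rule cond_prob_hit_singleton[OF G(1) Fn])
    also have "\<dots> \<le> (real L / ?f) ^ L"
      using G cG small by (intro inverse_binomial_le) linarith+
    also have "\<dots> \<le> (real L / (real n / 4)) ^ L"
      using f n by (intro power_mono divide_left_mono) auto
    also have "\<dots> = (4 * real L / n) ^ L" by (simp add: mult.commute)
    finally show ?thesis .
  qed
  have "finite W" using W(1) finite_Btilde finite_subset by blast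
  then have "cond_prob_hit n (\<Union>G\<in>W. {G}) F \<le> (\<Sum>G\<in>W. cond_prob_hit n {G} F)"
    by (rule cond_prob_hit_UN_le)
  also have "\<dots> \<le> card W * (4 * real L / n) ^ L"
    using single by (rule sum_bounded_above)
  finally show ?thesis by simp
qed

lemma cond_prob_hit_Dstar_Un_le:
  assumes F: "F \<in> Btilde n"
    and W1: "W1 \<subseteq> Btilde n" "\<forall>B\<in>W1. \<not> F \<subseteq> B" "card W1 \<le> p"
    and W2: "W2 \<subseteq> Btilde n" "\<forall>G\<in>W2. G \<subseteq> F \<and> L \<le> card (F - G)" "card W2 \<le> \<gamma> * real n ^ L"
    and small: "Btilde_radius n \<le> real n / 4" "real L \<le> real n / 4"
  shows "cond_prob_hit n (Dstar n F W1 \<union> W2) F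
       \<le> p * (16 * Btilde_radius n / n) + \<gamma> * (4 * real L) ^ L"
proof -
  let ?r = "Btilde_radius n" and ?f = "card F"
  have f: "real n / 4 \<le> real ?f" and r: "0 \<le> ?r" "0 < real n"
    using F small unfolding Btilde_iff by linarith+
  have "cond_prob_hit n (Dstar n F W1) F \<le> card W1 * (4 * ?r / ?f)"
    by (rule cond_prob_hit_Dstar[OF F W1(1,2)])
  also have "\<dots> \<le> p * (4 * ?r / (real n / 4))"
    using f r W1(3) by (intro mult_mono divide_left_mono) auto
  finally have Dstar: "cond_prob_hit n (Dstar n F W1) F \<le> p * (16 * ?r / n)" by simp
  have "cond_prob_hit n W2 F \<le> card W2 * (4 * real L / n) ^ L"
    by (rule cond_prob_hit_gapped_subsets[OF F W2(1,2) small])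
  also have "\<dots> \<le> \<gamma> * real n ^ L * (4 * real L / n) ^ L"
    using W2(3) by (rule mult_right_mono) simp
  also have "\<dots> = \<gamma> * (4 * real L) ^ L"
    using r by (simp add: power_divide)
  finally show ?thesis using Dstar cond_prob_hit_Un_le[of n "Dstar n F W1" W2 F] by linarith
qed

lemma complement_image_iff: "X \<subseteq> Pow U \<Longrightarrow> T \<subseteq> U \<Longrightarrow> T \<in> (-) U ` X \<longleftrightarrow> U - T \<in> X"
  by (auto simp: double_diff)

lemma Ustar_complement:
  assumes "F \<subseteq> {1..n}" "W \<subseteq> Pow {1..n}"
  shows "(-) {1..n} ` Ustar n F W = Dstar n ({1..n} - F) ((-) {1..n} ` W)"
proof -
  let ?U = "{1..n}"
  have "T \<in> (-) ?U ` Ustar n F W \<longleftrightarrow> T \<in> Dstar n (?U - F) ((-) ?U ` W)" for T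
  proof (cases "T \<subseteq> ?U")
    case True
    have swap: "(T \<subseteq> ?U - B \<or> ?U - B \<subseteq> T) \<longleftrightarrow> (?U - T \<subseteq> B \<or> B \<subseteq> ?U - T)" if "B \<subseteq> ?U" for B
      using that True by blast
    have "T \<in> Comp n ((-) ?U ` W) \<longleftrightarrow> (\<exists>B\<in>W. T \<subseteq> ?U - B \<or> ?U - B \<subseteq> T)"
      using True by (simp add: Comp_def)
    also have "\<dots> \<longleftrightarrow> (\<exists>B\<in>W. ?U - T \<subseteq> B \<or> B \<subseteq> ?U - T)"
      by (intro bex_cong refl swap) (use assms(2) in blast)
    also have "\<dots> \<longleftrightarrow> ?U - T \<in> Comp n W" by (simp add: Comp_def)
    finally have Comp: "T \<in> Comp n ((-) ?U ` W) \<longleftrightarrow> ?U - T \<in> Comp n W" .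
    have "?U - (?U - T) = T" "?U - (?U - F) = F" using True assms(1) by auto
    then have "?U - T = F \<longleftrightarrow> T = ?U - F" by metis
    moreover have "F \<subseteq> ?U - T \<longleftrightarrow> T \<subseteq> ?U - F" using True assms(1) by blast
    ultimately have Up: "?U - T \<in> Up n F - {F} \<longleftrightarrow> T \<in> Down n (?U - F) - {?U - F}"
      using True unfolding Up_def Down_def by simp
    have "Ustar n F W \<subseteq> Pow ?U" unfolding Ustar_def Up_def by auto
    then have "T \<in> (-) ?U ` Ustar n F W \<longleftrightarrow> ?U - T \<in> Ustar n F W"
      using True by (rule complement_image_iff)
    also have "\<dots> \<longleftrightarrow> T \<in> Dstar n (?U - F) ((-) ?U ` W)"
      unfolding Ustar_def Dstar_def using Up Comp Btilde_complement[OF True] by blast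
    finally show ?thesis .
  next
    case False
    then show ?thesis unfolding Dstar_def Down_def by auto
  qed
  then show ?thesis by blast
qed

lemma complement_image_Btilde:
  assumes "X \<subseteq> Btilde n"
  shows "(-) {1..n} ` X \<subseteq> Btilde n"
proof
  fix T assume "T \<in> (-) {1..n} ` X"
  then obtain B where "B \<in> X" "T = {1..n} - B" by blast
  then show "T \<in> Btilde n" using assms Btilde_complement[of B n] unfolding Btilde_def by blast
qed

lemma cond_prob_hit_Ustar_Un_le:
  assumes F: "F \<in> Btilde n"
    and W1: "W1 \<subseteq> Btilde n" "\<forall>B\<in>W1. \<not> B \<subseteq> F" "card W1 \<le> p"
    and W2: "W2 \<subseteq> Btilde n" "\<forall>G\<in>W2. F \<subseteq> G \<and> L \<le> card (G - F)" "card W2 \<le> \<gamma> * real n ^ L"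
    and small: "Btilde_radius n \<le> real n / 4" "real L \<le> real n / 4"
  shows "cond_prob_hit n (Ustar n F W1 \<union> W2) F
       \<le> p * (16 * Btilde_radius n / n) + \<gamma> * (4 * real L) ^ L"
proof -
  let ?U = "{1..n}"
  have Btilde_Pow: "Btilde n \<subseteq> Pow ?U" unfolding Btilde_def by auto
  have Fn: "F \<subseteq> ?U" using F Btilde_Pow by blast
  have "Ustar n F W1 \<union> W2 \<subseteq> Pow ?U" using W2(1) Btilde_Pow unfolding Ustar_def Up_def by auto
  then have "cond_prob_hit n (Ustar n F W1 \<union> W2) F
      = cond_prob_hit n ((-) ?U ` (Ustar n F W1 \<union> W2)) (?U - F)"
    by (rule cond_prob_hit_complement[OF Fn, symmetric])
  also have "(-) ?U ` (Ustar n F W1 \<union> W2) = Dstar n (?U - F) ((-) ?U ` W1) \<union> (-) ?U ` W2"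
    using Ustar_complement[OF Fn] W1(1) Btilde_Pow by (metis image_Un order_trans)
  also have "cond_prob_hit n \<dots> (?U - F) \<le> p * (16 * Btilde_radius n / n) + \<gamma> * (4 * real L) ^ L"
  proof (rule cond_prob_hit_Dstar_Un_le[OF _ _ _ _ _ _ _ small])
    show "?U - F \<in> Btilde n" using F Btilde_complement[OF Fn] by simp
    show "(-) ?U ` W1 \<subseteq> Btilde n" "(-) ?U ` W2 \<subseteq> Btilde n"
      by (rule complement_image_Btilde[OF W1(1)], rule complement_image_Btilde[OF W2(1)])
    show "\<forall>B'\<in>(-) ?U ` W1. \<not> ?U - F \<subseteq> B'"
    proof
      fix B' assume "B' \<in> (-) ?U ` W1"
      then obtain B where B: "B \<in> W1" "B' = ?U - B" by blast
      then have "B \<subseteq> ?U" "\<not> B \<subseteq> F" using W1(1,2) Btilde_Pow by blast+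
      then show "\<not> ?U - F \<subseteq> B'" using B(2) by blast
    qed
    show "\<forall>G\<in>(-) ?U ` W2. G \<subseteq> ?U - F \<and> L \<le> card (?U - F - G)"
    proof
      fix G' assume "G' \<in> (-) ?U ` W2"
      then obtain G where G: "G \<in> W2" "G' = ?U - G" by blast
      then have "G \<subseteq> ?U" using W2(1) Btilde_Pow by blast
      then have "?U - F - G' = G - F" using G(2) by auto
      then show "G' \<subseteq> ?U - F \<and> L \<le> card (?U - F - G')" using G W2(2) by auto
    qed
    show "card ((-) ?U ` W1) \<le> p"
      using W1(3) card_image_le[OF finite_subset[OF W1(1) finite_Btilde], of "(-) ?U"] by linarith
    show "card ((-) ?U ` W2) \<le> \<gamma> * real n ^ L"
      using W2(3) card_image_le[OF finite_subset[OF W2(1) finite_Btilde], of "(-) ?U"]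
      by (meson of_nat_mono order_trans)
  qed
  finally show ?thesis .
qed

section \<open>Marked chains\<close>

lemma q_chain_mem_in_set: "q_chain q Q \<Longrightarrow> 1 \<le> j \<Longrightarrow> j \<le> q \<Longrightarrow> mem Q j \<in> set Q"
  unfolding q_chain_def mem_def by auto

lemma q_chain_gap:
  assumes Q: "q_chain q Q" "gapped_family l (set Q)" "\<forall>X\<in>set Q. finite X"
    and "1 \<le> a" "a \<le> b" "b \<le> q"
  shows "mem Q b \<subseteq> mem Q a \<and> l * (b - a) \<le> card (mem Q a - mem Q b)"
  using \<open>a \<le> b\<close> \<open>b \<le> q\<close>
proof (induction b rule: dec_induct)
  case base
  then show ?case by simp
next
  case (step k)
  then have k: "1 \<le> k" "k < q" "a \<le> k" using \<open>1 \<le> a\<close> by auto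
  then have IH: "mem Q k \<subseteq> mem Q a" "l * (k - a) \<le> card (mem Q a - mem Q k)"
    using step.IH by auto
  have strict: "mem Q (Suc k) \<subset> mem Q k" using Q(1) k unfolding q_chain_def by simp
  have mems: "mem Q a \<in> set Q" "mem Q k \<in> set Q" "mem Q (Suc k) \<in> set Q"
    using q_chain_mem_in_set[OF Q(1)] k \<open>1 \<le> a\<close> by auto
  then have "l \<le> card (mem Q k - mem Q (Suc k))"
    using Q(2) strict unfolding gapped_family_def by blast
  moreover have split: "mem Q a - mem Q (Suc k) = (mem Q a - mem Q k) \<union> (mem Q k - mem Q (Suc k))"
    using IH(1) strict by blast
  have "card (mem Q a - mem Q (Suc k)) = card (mem Q a - mem Q k) + card (mem Q k - mem Q (Suc k))"
    unfolding split by (rule card_Un_disjoint) (use Q(3) mems in auto)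
  moreover have "l * (Suc k - a) = l * (k - a) + l" using k by (simp add: Suc_diff_le)
  ultimately show ?case using IH strict by auto
qed

lemma marked_chain_gap:
  assumes M: "\<forall>m\<in>M. q_marked_chain n q m \<and> set (snd m) \<subseteq> Btilde n" "gapped_marked l M"
    and "m \<in> M" "1 \<le> a" "a \<le> b" "b \<le> q"
  shows "mem (snd m) b \<in> set (snd m)" "mem (snd m) b \<subseteq> mem (snd m) a"
    "l * (b - a) \<le> card (mem (snd m) a - mem (snd m) b)"
proof -
  have Q: "q_chain q (snd m)" using M(1) \<open>m \<in> M\<close> unfolding q_marked_chain_def by blast
  then show "mem (snd m) b \<in> set (snd m)" using q_chain_mem_in_set assms(4-6) by simp
  have "set (snd m) \<subseteq> members M" unfolding members_def using \<open>m \<in> M\<close> by blast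
  then have "gapped_family l (set (snd m))"
    using M(2) unfolding gapped_marked_def gapped_family_def by (meson subsetD)
  moreover have "\<forall>X\<in>set (snd m). finite X"
    using M(1) \<open>m \<in> M\<close> finite_subset[OF _ finite_atLeastAtMost] unfolding Btilde_def by blast
  ultimately show "mem (snd m) b \<subseteq> mem (snd m) a"
    "l * (b - a) \<le> card (mem (snd m) a - mem (snd m) b)"
    using q_chain_gap[OF Q _ _ assms(4-6)] by auto
qed

lemma LevD:
  assumes "\<forall>m\<in>M. q_marked_chain n q m \<and> set (snd m) \<subseteq> Btilde n" "F \<in> Lev i M" "1 \<le> i" "i \<le> q"
  shows "F \<in> Btilde n" "Msub M F i \<noteq> {}"
proof -
  obtain m where m: "m \<in> M" "mem (snd m) i = F" using assms(2) unfolding Lev_def by blast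
  then have "q_chain q (snd m)" using assms(1) unfolding q_marked_chain_def by blast
  then show "F \<in> Btilde n" using q_chain_mem_in_set assms m by blast
  show "Msub M F i \<noteq> {}" using m unfolding Msub_def by blast
qed

lemma isg_bad_imp_lower_bad:
  assumes M: "\<forall>m\<in>M. q_marked_chain n q m \<and> set (snd m) \<subseteq> Btilde n" "gapped_marked l M"
    and bad: "isg_bad n p l i s \<gamma> M F" and "1 \<le> i" "i < s" "s \<le> q"
    and small: "Btilde_radius n \<le> real n / 4" "real (l * (s - i)) \<le> real n / 4"
  shows "lower_bad n i
           (p * (16 * Btilde_radius n / n) + \<gamma> * (4 * real (l * (s - i))) ^ (l * (s - i))) M F"
proof -
  define L where "L = l * (s - i)"
  obtain W1 W2 where W: "W1 \<subseteq> Btilde n" "W2 \<subseteq> Btilde n" "W1 \<inter> Up n F = {}" "card W1 \<le> p"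
      "real (card W2) \<le> \<gamma> * real n ^ L"
    and cover: "\<forall>m\<in>Msub M F i. set (snd m) \<inter> Dstar n F W1 \<noteq> {} \<or> mem (snd m) s \<in> W2"
    using bad \<open>i < s\<close> unfolding isg_bad_def L_def by auto
  have F: "F \<in> Btilde n" "Msub M F i \<noteq> {}"
    using LevD[OF M(1)] bad \<open>1 \<le> i\<close> \<open>i < s\<close> \<open>s \<le> q\<close> unfolding isg_bad_def by auto
  define W2' where "W2' = {G \<in> W2. G \<subseteq> F \<and> L \<le> card (F - G)}"
  have "\<forall>D\<in>Dstar n F W1 \<union> W2'. D \<subseteq> F" unfolding Dstar_def Down_def W2'_def by blast
  moreover have "\<forall>m\<in>Msub M F i. set (snd m) \<inter> (Dstar n F W1 \<union> W2') \<noteq> {}"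
  proof
    fix m assume m: "m \<in> Msub M F i"
    then have m': "m \<in> M" "mem (snd m) i = F" unfolding Msub_def by auto
    then have "mem (snd m) s \<in> set (snd m)" "mem (snd m) s \<subseteq> F" "L \<le> card (F - mem (snd m) s)"
      using marked_chain_gap[OF M m'(1) \<open>1 \<le> i\<close>, where b = s] \<open>i < s\<close> \<open>s \<le> q\<close>
      unfolding L_def by auto
    then show "set (snd m) \<inter> (Dstar n F W1 \<union> W2') \<noteq> {}" using cover m unfolding W2'_def by blast
  qed
  moreover have "cond_prob_hit n (Dstar n F W1 \<union> W2') F
      \<le> p * (16 * Btilde_radius n / n) + \<gamma> * (4 * real L) ^ L"
  proof (rule cond_prob_hit_Dstar_Un_le[OF F(1) W(1) _ W(4)])
    show "\<forall>B\<in>W1. \<not> F \<subseteq> B" using W(1,3) unfolding Up_def Btilde_def by blast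
    have "card W2' \<le> card W2"
      unfolding W2'_def by (rule card_mono[OF finite_subset[OF W(2) finite_Btilde]]) blast
    then show "real (card W2') \<le> \<gamma> * real n ^ L" using W(5) by linarith
    show "W2' \<subseteq> Btilde n" "\<forall>G\<in>W2'. G \<subseteq> F \<and> L \<le> card (F - G)"
      using W(2) unfolding W2'_def by blast+
  qed (use small in \<open>simp_all add: L_def\<close>)
  ultimately show ?thesis
    unfolding lower_bad_def L_def using F(2) by (intro conjI exI[where x = "Dstar n F W1 \<union> W2'"])
qed

lemma isg_bad_imp_upper_bad:
  assumes M: "\<forall>m\<in>M. q_marked_chain n q m \<and> set (snd m) \<subseteq> Btilde n" "gapped_marked l M"
    and bad: "isg_bad n p l i s \<gamma> M F" and "1 \<le> s" "s < i" "i \<le> q"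
    and small: "Btilde_radius n \<le> real n / 4" "real (l * (i - s)) \<le> real n / 4"
  shows "upper_bad n i
           (p * (16 * Btilde_radius n / n) + \<gamma> * (4 * real (l * (i - s))) ^ (l * (i - s))) M F"
proof -
  define L where "L = l * (i - s)"
  obtain W1 W2 where W: "W1 \<subseteq> Btilde n" "W2 \<subseteq> Btilde n" "W1 \<inter> Down n F = {}" "card W1 \<le> p"
      "real (card W2) \<le> \<gamma> * real n ^ L"
    and cover: "\<forall>m\<in>Msub M F i. set (snd m) \<inter> Ustar n F W1 \<noteq> {} \<or> mem (snd m) s \<in> W2"
    using bad \<open>s < i\<close> unfolding isg_bad_def L_def by auto
  have F: "F \<in> Btilde n" "Msub M F i \<noteq> {}"
    using LevD[OF M(1)] bad \<open>1 \<le> s\<close> \<open>s < i\<close> \<open>i \<le> q\<close> unfolding isg_bad_def by auto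
  define W2' where "W2' = {G \<in> W2. F \<subseteq> G \<and> L \<le> card (G - F)}"
  have "\<forall>D\<in>Ustar n F W1 \<union> W2'. F \<subseteq> D \<and> D \<subseteq> {1..n}"
    using W(2) unfolding Ustar_def Up_def W2'_def Btilde_def by blast
  moreover have "\<forall>m\<in>Msub M F i. set (snd m) \<inter> (Ustar n F W1 \<union> W2') \<noteq> {}"
  proof
    fix m assume m: "m \<in> Msub M F i"
    then have m': "m \<in> M" "mem (snd m) i = F" unfolding Msub_def by auto
    then have "mem (snd m) s \<in> set (snd m)" "F \<subseteq> mem (snd m) s" "L \<le> card (mem (snd m) s - F)"
      using marked_chain_gap[OF M m'(1) \<open>1 \<le> s\<close>, where b = i]
        marked_chain_gap[OF M m'(1) \<open>1 \<le> s\<close>, where b = s] \<open>s < i\<close> \<open>i \<le> q\<close>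
      unfolding L_def by auto
    then show "set (snd m) \<inter> (Ustar n F W1 \<union> W2') \<noteq> {}" using cover m unfolding W2'_def by blast
  qed
  moreover have "cond_prob_hit n (Ustar n F W1 \<union> W2') F
      \<le> p * (16 * Btilde_radius n / n) + \<gamma> * (4 * real L) ^ L"
  proof (rule cond_prob_hit_Ustar_Un_le[OF F(1) W(1) _ W(4)])
    show "\<forall>B\<in>W1. \<not> B \<subseteq> F" using W(1,3) unfolding Down_def Btilde_def by blast
    have "card W2' \<le> card W2"
      unfolding W2'_def by (rule card_mono[OF finite_subset[OF W(2) finite_Btilde]]) blast
    then show "real (card W2') \<le> \<gamma> * real n ^ L" using W(5) by linarith
    show "W2' \<subseteq> Btilde n" "\<forall>G\<in>W2'. F \<subseteq> G \<and> L \<le> card (G - F)"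
      using W(2) unfolding W2'_def by blast+
  qed (use small in \<open>simp_all add: L_def\<close>)
  ultimately show ?thesis
    unfolding upper_bad_def L_def using F(2) by (intro conjI exI[where x = "Ustar n F W1 \<union> W2'"])
qed

lemma lower_bad_mono: "lower_bad n i \<delta> M F \<Longrightarrow> \<delta> \<le> \<delta>' \<Longrightarrow> lower_bad n i \<delta>' M F"
  unfolding lower_bad_def by (meson order_trans)

lemma upper_bad_mono: "upper_bad n i \<delta> M F \<Longrightarrow> \<delta> \<le> \<delta>' \<Longrightarrow> upper_bad n i \<delta>' M F"
  unfolding upper_bad_def by (meson order_trans)

lemma four_mult_self_power_mono:
  assumes "L \<le> K"
  shows "(4 * real L) ^ L \<le> (4 * real K) ^ K"
proof (cases "L = 0")
  case True
  have "1 \<le> (4 * real K) ^ K" by (cases "K = 0") (simp, rule one_le_power, simp)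
  then show ?thesis using True by simp
next
  case False
  have "(4 * real L) ^ L \<le> (4 * real K) ^ L" using assms by (intro power_mono) auto
  also have "\<dots> \<le> (4 * real K) ^ K" using assms False by (intro power_increasing) auto
  finally show ?thesis .
qed

lemma isg_bad_imp_lower_upper_bad:
  assumes M: "\<forall>m\<in>M. q_marked_chain n q m \<and> set (snd m) \<subseteq> Btilde n" "gapped_marked l M"
    and bad: "isg_bad n p l i s \<gamma> M F" and "i \<in> {1..q}" "s \<in> {1..q}"
    and small: "Btilde_radius n \<le> real n / 4" "real (l * q) \<le> real n / 4"
    and "0 \<le> \<gamma>" and \<delta>: "p * (16 * Btilde_radius n / n) + \<gamma> * (4 * real (l * q)) ^ (l * q) \<le> \<delta>"
  shows "(i < s \<longrightarrow> lower_bad n i \<delta> M F) \<and> (s < i \<longrightarrow> upper_bad n i \<delta> M F)"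
proof (intro conjI impI)
  have \<delta>_L: "p * (16 * Btilde_radius n / n) + \<gamma> * (4 * real L) ^ L \<le> \<delta>" if "L \<le> l * q" for L
    using four_mult_self_power_mono[OF that] \<open>0 \<le> \<gamma>\<close> \<delta>
    by (meson add_left_mono mult_left_mono order_trans)
  have L: "l * (s - i) \<le> l * q" "l * (i - s) \<le> l * q"
    using assms(4,5) by (simp_all add: le_diff_conv)
  show "lower_bad n i \<delta> M F" if "i < s"
    using isg_bad_imp_lower_bad[OF M bad _ that] L small \<delta>_L assms(4,5)
    by (meson atLeastAtMost_iff lower_bad_mono of_nat_mono order_trans)
  show "upper_bad n i \<delta> M F" if "s < i"
    using isg_bad_imp_upper_bad[OF M bad _ that] L small \<delta>_L assms(4,5)
    by (meson atLeastAtMost_iff upper_bad_mono of_nat_mono order_trans)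
qed

lemma Btilde_radius_over_n_tendsto_0: "(\<lambda>n. Btilde_radius n / real n) \<longlonglongrightarrow> 0"
  unfolding Btilde_radius_def by real_asymp

lemma eventually_Btilde_radius_small:
  assumes "0 < \<epsilon>"
  shows "\<forall>\<^sub>F n in sequentially. Btilde_radius n \<le> real n / 4 \<and> c \<le> real n / 4 \<and>
           p * (16 * Btilde_radius n / n) \<le> \<epsilon>"
proof -
  have "\<forall>\<^sub>F n in sequentially. Btilde_radius n / n < 1 / 4"
    by (rule order_tendstoD(2)[OF Btilde_radius_over_n_tendsto_0]) simp
  moreover have "\<forall>\<^sub>F n in sequentially. p * 16 * (Btilde_radius n / n) < \<epsilon>"
    by (rule order_tendstoD(2)[OF tendsto_mult_right_zero[OF Btilde_radius_over_n_tendsto_0]])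
      (use assms in simp)
  moreover have "\<forall>\<^sub>F n in sequentially. 0 < n \<and> 4 * c \<le> real n"
    by (intro eventually_conj eventually_gt_at_top) real_asymp
  ultimately show ?thesis
  proof eventually_elim
    case (elim n)
    then have "Btilde_radius n = Btilde_radius n / n * n" by simp
    also have "\<dots> \<le> 1 / 4 * n" using elim by (intro mult_right_mono) auto
    finally show ?case using elim by simp
  qed
qed

theorem lemma4p17:
  fixes P :: "'a set" and le :: "'a \<Rightarrow> 'a \<Rightarrow> bool"
  assumes "tree_poset P le"
  shows "\<forall>\<delta>::real. \<forall>l q::nat. \<delta> > 0 \<and> l \<ge> 1 \<and> q \<ge> 1 \<longrightarrow>
    (\<exists>\<gamma>::real. \<gamma> > 0 \<and> (\<exists>N::nat. \<forall>n\<ge>N. \<forall>i\<in>{1..q}. \<forall>s\<in>{1..q}. i \<noteq> s \<longrightarrow>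
      (\<forall>\<M> F. (\<forall>m\<in>\<M>. q_marked_chain n q m \<and> set (snd m) \<subseteq> Btilde n) \<and>
              gapped_marked l \<M> \<and> F \<in> Lev i \<M> \<and>
              isg_bad n (card P) l i s \<gamma> \<M> F \<longrightarrow>
         (i < s \<longrightarrow> lower_bad n i \<delta> \<M> F) \<and> (s < i \<longrightarrow> upper_bad n i \<delta> \<M> F))))"
proof (intro allI impI)
  fix \<delta> :: real and l q :: nat
  assume "\<delta> > 0 \<and> l \<ge> 1 \<and> q \<ge> 1"
  then have "\<delta> > 0" by simp
  define K where "K = l * q"
  define \<gamma> where "\<gamma> = \<delta> / (2 * (4 * real K) ^ K)"
  have "0 < (4 * real K) ^ K" by (cases "K = 0") simp_all
  then have \<gamma>: "0 < \<gamma>" "\<gamma> * (4 * real K) ^ K = \<delta> / 2"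
    using \<open>\<delta> > 0\<close> by (simp_all add: \<gamma>_def)
  obtain N where N: "\<And>n. N \<le> n \<Longrightarrow> Btilde_radius n \<le> real n / 4 \<and> real K \<le> real n / 4 \<and>
      card P * (16 * Btilde_radius n / n) \<le> \<delta> / 2"
    using eventually_Btilde_radius_small[of "\<delta> / 2" "real K" "real (card P)"] \<open>\<delta> > 0\<close>
    unfolding eventually_sequentially by auto
  have "(i < s \<longrightarrow> lower_bad n i \<delta> \<M> F) \<and> (s < i \<longrightarrow> upper_bad n i \<delta> \<M> F)"
    if "N \<le> n" "i \<in> {1..q}" "s \<in> {1..q}"
      and H: "(\<forall>m\<in>\<M>. q_marked_chain n q m \<and> set (snd m) \<subseteq> Btilde n) \<and>
              gapped_marked l \<M> \<and> F \<in> Lev i \<M> \<and> isg_bad n (card P) l i s \<gamma> \<M> F"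
    for n i s \<M> F
  proof (rule isg_bad_imp_lower_upper_bad)
    show "card P * (16 * Btilde_radius n / n) + \<gamma> * (4 * real (l * q)) ^ (l * q) \<le> \<delta>"
      using N[OF that(1)] \<gamma>(2) unfolding K_def by linarith
  qed (use H N[OF that(1)] \<gamma>(1) that(2,3) in \<open>auto simp: K_def\<close>)
  then show "\<exists>\<gamma>>0. \<exists>N. \<forall>n\<ge>N. \<forall>i\<in>{1..q}. \<forall>s\<in>{1..q}. i \<noteq> s \<longrightarrow>
      (\<forall>\<M> F. (\<forall>m\<in>\<M>. q_marked_chain n q m \<and> set (snd m) \<subseteq> Btilde n) \<and>
              gapped_marked l \<M> \<and> F \<in> Lev i \<M> \<and> isg_bad n (card P) l i s \<gamma> \<M> F \<longrightarrow>
         (i < s \<longrightarrow> lower_bad n i \<delta> \<M> F) \<and> (s < i \<longrightarrow> upper_bad n i \<delta> \<M> F))"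
    using \<gamma>(1) by blast
qed

end
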